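(* For $0<c<1$ let $d_c=\sup_{x\in(0,1)}\frac{\ln(1-cx^2)}{\ln(1-x)}$ and let $x_c\in(0,1)$ be the point where this supremum is attained. Then $$x_c=\frac{1+\sqrt{1-\frac{d_c}{c}(2-d_c)}}{2-d_c}.$$ Moreover, the function $\psi(c)=d_c/c$ is increasing on $(0,1)$ and $\lim_{c\to0^+}\psi(c)=m_0(2):=\sup_{x\in(0,1)}\frac{x^2}{-\ln(1-x)}$. *)

theory Defs
  imports Complex_Main
begin

definition ratio_fn :: "real \<Rightarrow> real \<Rightarrow> real" where
  "ratio_fn c x = ln (1 - c * x\<^sup>2) / ln (1 - x)"

definition d_const :: "real \<Rightarrow> real" where
  "d_const c = (SUP x\<in>{0<..<1}. ratio_fn c x)"

definition psi :: "real \<Rightarrow> real" where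
  "psi c = d_const c / c"

definition m0_2 :: real where
  "m0_2 = (SUP x\<in>{0<..<(1::real)}. x\<^sup>2 / (- ln (1 - x)))"

end

theory Submission
  imports Defs
begin

text \<open>For fixed \<open>c\<close> the ratio tends to \<open>0\<close> at both ends of \<open>(0, 1)\<close>, so its supremum
  \<open>d\<close> is attained. At a maximiser \<open>x\<close> the gap \<open>ln (1 - c y\<^sup>2) - d ln (1 - y)\<close> attains its
  minimum \<open>0\<close>; its derivative has the sign of the quadratic \<open>c (2 - d) y\<^sup>2 - 2 c y + d\<close>, so
  \<open>x\<close> is a root, and since the gap decreases just past the smaller root, \<open>x\<close> is the larger one.
  Monotonicity of \<open>\<psi>\<close> comes from the factorisation
  \<open>ratio / c = (- ln (1 - c x\<^sup>2) / (c x\<^sup>2)) (x\<^sup>2 / - ln (1 - x))\<close>, whose first factor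
  increases with \<open>c\<close>; and \<open>c x\<^sup>2 \<le> - ln (1 - c x\<^sup>2) \<le> c x\<^sup>2 / (1 - c)\<close> squeezes
  \<open>\<psi> c\<close> between \<open>m\<^sub>0(2)\<close> and \<open>m\<^sub>0(2) / (1 - c)\<close>.\<close>

lemma minus_ln_one_minus_ge: "t < 1 \<Longrightarrow> t \<le> - ln (1 - t)" for t :: real
  using ln_le_minus_one[of "1 - t"] by simp

lemma minus_ln_one_minus_less:
  fixes t :: real assumes "0 < t" "t < 1"
  shows "- ln (1 - t) < t / (1 - t)"
proof -
  have "ln (1 + t / (1 - t)) < t / (1 - t)"
    using assms by (intro ln_add_one_self_less_self) simp
  moreover have "1 + t / (1 - t) = inverse (1 - t)"
    using assms by (simp add: field_simps)
  ultimately show ?thesis using assms by (simp add: ln_inverse)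
qed

lemma minus_ln_one_minus_le: "0 \<le> t \<Longrightarrow> t < 1 \<Longrightarrow> - ln (1 - t) \<le> t / (1 - t)" for t :: real
  using minus_ln_one_minus_less[of t] by (cases "t = 0") auto

lemma minus_ln_one_minus_div_strict_mono:
  fixes s t :: real assumes "0 < s" "s < t" "t < 1"
  shows "- ln (1 - s) / s < - ln (1 - t) / t"
proof (rule DERIV_pos_imp_increasing_open[OF \<open>s < t\<close>])
  fix x assume "s < x" "x < t"
  then have x: "0 < x" "x < 1" using assms by auto
  have "((\<lambda>u. - ln (1 - u) / u) has_real_derivative (x / (1 - x) - (- ln (1 - x))) / x\<^sup>2) (at x)"
    using x by (auto intro!: derivative_eq_intros simp: power2_eq_square field_simps)
  moreover have "0 < (x / (1 - x) - (- ln (1 - x))) / x\<^sup>2"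
    using minus_ln_one_minus_less[OF x] x by simp
  ultimately show "\<exists>y. ((\<lambda>u. - ln (1 - u) / u) has_real_derivative y) (at x) \<and> 0 < y"
    by blast
qed (use assms in \<open>auto intro!: continuous_intros\<close>)

lemma scaled_square_bounds:
  fixes c x :: real assumes "0 < c" "c < 1" "0 < x" "x < 1"
  shows "0 < c * x\<^sup>2" "c * x\<^sup>2 < x" "c * x\<^sup>2 < c"
proof -
  have "x * x < x" using mult_strict_left_mono[of x 1 x] assms by simp
  then have x2: "x\<^sup>2 < x" "x\<^sup>2 < 1" using assms by (auto simp only: power2_eq_square)
  have "c * x\<^sup>2 \<le> x\<^sup>2" using assms by (intro mult_left_le_one_le) auto
  with x2 show "c * x\<^sup>2 < x" by linarith
  show "0 < c * x\<^sup>2" "c * x\<^sup>2 < c" using assms x2 by auto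
qed

lemma ratio_fn_eq_minus_ln: "ratio_fn c x = - ln (1 - c * x\<^sup>2) / - ln (1 - x)"
  by (simp add: ratio_fn_def)

context
  fixes c x :: real
  assumes c: "0 < c" "c < 1" and x: "0 < x" "x < 1"
begin

private lemma numerator_bounds:
  "c * x\<^sup>2 \<le> - ln (1 - c * x\<^sup>2)" "- ln (1 - c * x\<^sup>2) \<le> c * x\<^sup>2 / (1 - c)"
  "- ln (1 - c * x\<^sup>2) < - ln (1 - x)" "- ln (1 - c * x\<^sup>2) \<le> - ln (1 - c)"
proof -
  note cx = scaled_square_bounds[OF c x]
  show "c * x\<^sup>2 \<le> - ln (1 - c * x\<^sup>2)"
    using minus_ln_one_minus_ge cx by (simp add: less_trans[OF cx(3) c(2)])
  have "- ln (1 - c * x\<^sup>2) \<le> c * x\<^sup>2 / (1 - c * x\<^sup>2)"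
    using minus_ln_one_minus_le[of "c * x\<^sup>2"] cx c by simp
  also have "\<dots> \<le> c * x\<^sup>2 / (1 - c)"
    using cx c x by (intro divide_left_mono mult_pos_pos) auto
  finally show "- ln (1 - c * x\<^sup>2) \<le> c * x\<^sup>2 / (1 - c)" .
  show "- ln (1 - c * x\<^sup>2) < - ln (1 - x)" "- ln (1 - c * x\<^sup>2) \<le> - ln (1 - c)"
    using cx c x by auto
qed

lemma ratio_fn_pos: "0 < ratio_fn c x"
  unfolding ratio_fn_eq_minus_ln using numerator_bounds(1) scaled_square_bounds[OF c x] x
  by (intro divide_pos_pos) auto

lemma ratio_fn_less_one: "ratio_fn c x < 1"
  unfolding ratio_fn_eq_minus_ln using numerator_bounds(3) x by (subst divide_less_eq_1_pos) auto

lemma ratio_fn_le_linear: "ratio_fn c x \<le> c * x / (1 - c)"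
proof -
  have "ratio_fn c x \<le> (c * x\<^sup>2 / (1 - c)) / x"
    unfolding ratio_fn_eq_minus_ln using numerator_bounds(1,2) minus_ln_one_minus_ge[of x] x
      scaled_square_bounds[OF c x] by (intro frac_le) auto
  also have "\<dots> = c * x / (1 - c)" using x by (simp add: power2_eq_square)
  finally show ?thesis .
qed

lemma ratio_fn_le_tail: "ratio_fn c x \<le> - ln (1 - c) / - ln (1 - x)"
  unfolding ratio_fn_eq_minus_ln using numerator_bounds(4) x by (intro divide_right_mono) auto

lemma ratio_fn_div_ge: "x\<^sup>2 / - ln (1 - x) \<le> ratio_fn c x / c"
proof -
  have "x\<^sup>2 / - ln (1 - x) = c * x\<^sup>2 / - ln (1 - x) / c" using c by simp
  also have "\<dots> \<le> ratio_fn c x / c"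
    unfolding ratio_fn_eq_minus_ln using numerator_bounds(1) c x by (intro divide_right_mono) auto
  finally show ?thesis .
qed

lemma ratio_fn_div_le: "ratio_fn c x / c \<le> x\<^sup>2 / - ln (1 - x) / (1 - c)"
proof -
  have "ratio_fn c x / c \<le> (c * x\<^sup>2 / (1 - c)) / - ln (1 - x) / c"
    unfolding ratio_fn_eq_minus_ln using numerator_bounds(2) c x
    by (intro divide_right_mono) auto
  also have "\<dots> = x\<^sup>2 / - ln (1 - x) / (1 - c)" using c by simp
  finally show ?thesis .
qed

end

lemma continuous_on_ratio_fn:
  fixes c :: real assumes "0 \<le> c" "c \<le> 1"
  shows "continuous_on {0<..<1} (ratio_fn c)"
proof -
  have "0 < 1 - c * x\<^sup>2" if "x \<in> {0<..<1}" for x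
  proof -
    have "x\<^sup>2 < 1" using that by (simp add: power_less_one_iff abs_less_iff)
    then show ?thesis using assms mult_left_le_one_le[of "x\<^sup>2" c] by auto
  qed
  then show ?thesis
    unfolding ratio_fn_def by (intro continuous_intros) (fastforce simp: less_imp_neq)+
qed

lemma ratio_fn_less_near_zero:
  fixes a c y :: real assumes c: "0 < c" "c < 1" and y: "0 < y" "y < 1" "y < a * (1 - c) / c"
  shows "ratio_fn c y < a"
proof -
  have "ratio_fn c y \<le> c * y / (1 - c)" using ratio_fn_le_linear[OF c y(1,2)] .
  also have "\<dots> < a" using y c by (simp add: field_simps)
  finally show ?thesis .
qed

lemma ratio_fn_less_near_one:
  fixes a c y :: real assumes c: "0 < c" "c < 1" and "0 < a"
    and y: "1 - exp (ln (1 - c) / a) < y" "y < 1"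
  shows "ratio_fn c y < a"
proof -
  have "exp (ln (1 - c) / a) < 1" using c \<open>0 < a\<close> by (simp add: divide_neg_pos)
  with y have "0 < y" by linarith
  have "ln (1 - y) < ln (exp (ln (1 - c) / a))"
    using y by (subst ln_less_cancel_iff) auto
  then have "- ln (1 - c) < a * - ln (1 - y)" using \<open>0 < a\<close> by (simp add: field_simps)
  moreover have "0 < - ln (1 - y)" using \<open>0 < y\<close> y by simp
  ultimately have "- ln (1 - c) / - ln (1 - y) < a" by (simp add: divide_less_eq)
  then show ?thesis using ratio_fn_le_tail[OF c \<open>0 < y\<close> \<open>y < 1\<close>] by linarith
qed

lemma ratio_fn_attains_max:
  fixes c :: real assumes c: "0 < c" "c < 1"
  obtains x where "x \<in> {0<..<1}" "\<And>y. y \<in> {0<..<1} \<Longrightarrow> ratio_fn c y \<le> ratio_fn c x"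
proof -
  define a where "a = ratio_fn c (1/2)"
  have "0 < a" unfolding a_def using ratio_fn_pos[OF c, of "1/2"] by simp
  define lo where "lo = min (1/2) (a * (1 - c) / c)"
  define hi where "hi = max (1/2) (1 - exp (ln (1 - c) / a))"
  have "lo \<le> 1/2" "1/2 \<le> hi" unfolding lo_def hi_def by (rule min.cobounded1 max.cobounded1)+
  moreover have "0 < lo" "hi < 1" unfolding lo_def hi_def using \<open>0 < a\<close> c by auto
  ultimately have lo_hi: "0 < lo" "lo \<le> 1/2" "1/2 \<le> hi" "hi < 1" by simp_all
  then have "{lo..hi} \<subseteq> {0<..<1}" by auto
  then have "continuous_on {lo..hi} (ratio_fn c)"
    using c by (intro continuous_on_subset[OF continuous_on_ratio_fn]) auto
  moreover have "{lo..hi} \<noteq> {}" using lo_hi by simp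
  ultimately obtain x where x: "x \<in> {lo..hi}"
    and max_lo_hi: "\<forall>y\<in>{lo..hi}. ratio_fn c y \<le> ratio_fn c x"
    using continuous_attains_sup[OF compact_Icc] by blast
  have "a \<le> ratio_fn c x" unfolding a_def using max_lo_hi lo_hi by auto
  show thesis
  proof
    show "x \<in> {0<..<1}" using x lo_hi by auto
    fix y :: real assume y: "y \<in> {0<..<1}"
    show "ratio_fn c y \<le> ratio_fn c x"
    proof (cases "y \<in> {lo..hi}")
      case False
      then have "ratio_fn c y < a"
        using y ratio_fn_less_near_zero[OF c, of y a] ratio_fn_less_near_one[OF c \<open>0 < a\<close>, of y]
        unfolding lo_def hi_def by (auto simp: not_le)
      with \<open>a \<le> ratio_fn c x\<close> show ?thesis by simp
    qed (use max_lo_hi in auto)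
  qed
qed

lemma ratio_fn_le_d_const:
  fixes c y :: real assumes c: "0 < c" "c < 1" and y: "y \<in> {0<..<1}"
  shows "ratio_fn c y \<le> d_const c"
  unfolding d_const_def using ratio_fn_less_one[OF c] y
  by (intro cSUP_upper bdd_aboveI2[of _ _ 1]) (auto intro: less_imp_le)

lemma d_const_attained:
  fixes c :: real assumes "0 < c" "c < 1"
  obtains x where "x \<in> {0<..<1}" "ratio_fn c x = d_const c"
proof -
  obtain x where x: "x \<in> {0<..<1}" and "\<And>y. y \<in> {0<..<1} \<Longrightarrow> ratio_fn c y \<le> ratio_fn c x"
    using ratio_fn_attains_max[OF assms] by blast
  then have "d_const c = ratio_fn c x" unfolding d_const_def by (intro cSup_eq_maximum) auto
  with x that show thesis by simp
qed

definition ratio_gap :: "real \<Rightarrow> real \<Rightarrow> real \<Rightarrow> real" where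
  "ratio_gap c d y = ln (1 - c * y\<^sup>2) - d * ln (1 - y)"

lemma ratio_fn_le_iff_ratio_gap_nonneg:
  fixes c d y :: real assumes "0 < y" "y < 1"
  shows "ratio_fn c y \<le> d \<longleftrightarrow> 0 \<le> ratio_gap c d y"
  using assms by (simp add: ratio_fn_def ratio_gap_def neg_divide_le_eq)

lemma ratio_fn_eq_iff_ratio_gap_zero:
  fixes c d y :: real assumes "0 < y" "y < 1"
  shows "ratio_fn c y = d \<longleftrightarrow> ratio_gap c d y = 0"
  using assms by (auto simp: ratio_fn_def ratio_gap_def field_simps)

lemma has_real_derivative_ratio_gap:
  fixes c d y :: real assumes "c * y\<^sup>2 < 1" "y < 1"
  shows "(ratio_gap c d has_real_derivative
           (c * (2 - d) * y\<^sup>2 - 2 * c * y + d) / ((1 - c * y\<^sup>2) * (1 - y))) (at y)"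
proof -
  have "(ratio_gap c d has_real_derivative
          - (c * (2 * y)) / (1 - c * y\<^sup>2) - d * (- 1 / (1 - y))) (at y)"
    unfolding ratio_gap_def[abs_def] using assms by (auto intro!: derivative_eq_intros)
  moreover have "- (c * (2 * y)) / (1 - c * y\<^sup>2) - d * (- 1 / (1 - y))
      = (c * (2 - d) * y\<^sup>2 - 2 * c * y + d) / ((1 - c * y\<^sup>2) * (1 - y))"
    using assms by (simp add: field_simps power2_eq_square)
  ultimately show ?thesis by simp
qed

context
  fixes c d x :: real
  assumes c: "0 < c" "c < 1" and x: "0 < x" "x < 1"
    and value_at: "ratio_fn c x = d" and maximal: "\<forall>y\<in>{0<..<1}. ratio_fn c y \<le> d"
begin

private lemma ratio_gap_local_min:
  "ratio_gap c d x = 0" "\<And>y. 0 < y \<Longrightarrow> y < 1 \<Longrightarrow> 0 \<le> ratio_gap c d y"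
  using value_at maximal x ratio_fn_eq_iff_ratio_gap_zero ratio_fn_le_iff_ratio_gap_nonneg by auto

private lemma scaled_square_less_one: "0 < y \<Longrightarrow> y < 1 \<Longrightarrow> c * y\<^sup>2 < 1"
  using scaled_square_bounds(3)[OF c] c(2) by force

lemma maximizer_quadratic_eq: "c * (2 - d) * x\<^sup>2 - 2 * c * x + d = 0"
proof -
  have "(c * (2 - d) * x\<^sup>2 - 2 * c * x + d) / ((1 - c * x\<^sup>2) * (1 - x)) = 0"
  proof (rule DERIV_local_min[OF has_real_derivative_ratio_gap])
    show "c * x\<^sup>2 < 1" "x < 1" "0 < min x (1 - x)"
      using scaled_square_less_one x by auto
    show "\<forall>y. \<bar>x - y\<bar> < min x (1 - x) \<longrightarrow> ratio_gap c d x \<le> ratio_gap c d y"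
      using ratio_gap_local_min by (auto simp: abs_if)
  qed
  moreover have "0 < (1 - c * x\<^sup>2) * (1 - x)" using scaled_square_less_one x by simp
  ultimately show ?thesis by (metis divide_eq_0_iff less_irrefl)
qed

lemma maximizer_beyond_vertex: "1 \<le> (2 - d) * x"
proof (rule ccontr)
  assume "\<not> 1 \<le> (2 - d) * x"
  have "d < 1" using value_at ratio_fn_less_one[OF c x] by simp
  define v where "v = min 1 (1 / (2 - d))"
  have "x < v" unfolding v_def using \<open>\<not> 1 \<le> (2 - d) * x\<close> x \<open>d < 1\<close> by (simp add: field_simps)
  define y where "y = (x + v) / 2"
  have y: "x < y" "y < v" "y < 1" using \<open>x < v\<close> unfolding y_def v_def by auto
  have "ratio_gap c d y < ratio_gap c d x"
  proof (rule DERIV_neg_imp_decreasing_open[OF \<open>x < y\<close>])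
    fix z assume z: "x < z" "z < y"
    then have z01: "0 < z" "z < 1" using x y by auto
    have "(2 - d) * (z + x) < (2 - d) * (2 * v)"
      using z y \<open>d < 1\<close> by (intro mult_strict_left_mono) auto
    also have "\<dots> \<le> 2" unfolding v_def using \<open>d < 1\<close> by (simp add: min_def field_simps)
    finally have "c * (z - x) * ((2 - d) * (z + x) - 2) < 0"
      using c z by (intro mult_pos_neg) auto
    then have "c * (2 - d) * z\<^sup>2 - 2 * c * z + d < 0"
      using maximizer_quadratic_eq by (simp add: algebra_simps power2_eq_square)
    moreover have "0 < (1 - c * z\<^sup>2) * (1 - z)" using scaled_square_less_one z01 by simp
    ultimately show "\<exists>l. (ratio_gap c d has_real_derivative l) (at z) \<and> l < 0"
      using has_real_derivative_ratio_gap[OF scaled_square_less_one[OF z01] z01(2)]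
      by (blast intro: divide_neg_pos)
  next
    have "\<forall>z\<in>{x..y}. isCont (ratio_gap c d) z"
      using has_real_derivative_ratio_gap[THEN DERIV_isCont] scaled_square_less_one x y
      by (metis atLeastAtMost_iff less_le_trans le_less_trans)
    then show "continuous_on {x..y} (ratio_gap c d)" by (rule continuous_at_imp_continuous_on)
  qed
  moreover have "0 \<le> ratio_gap c d y" using ratio_gap_local_min(2) x y by simp
  ultimately show False using ratio_gap_local_min(1) by simp
qed

end

lemma quadratic_larger_root:
  fixes c d x :: real
  assumes "0 < c" "d < 2" "c * (2 - d) * x\<^sup>2 - 2 * c * x + d = 0" "1 \<le> (2 - d) * x"
  shows "x = (1 + sqrt (1 - d / c * (2 - d))) / (2 - d)"
proof -
  have "c * ((2 - d) * x - 1)\<^sup>2 = (2 - d) * (c * (2 - d) * x\<^sup>2 - 2 * c * x + d) + c - (2 - d) * d"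
    by (simp add: algebra_simps power2_eq_square)
  also have "\<dots> = c * (1 - d / c * (2 - d))" using assms by (simp add: field_simps)
  finally have "1 - d / c * (2 - d) = ((2 - d) * x - 1)\<^sup>2" using \<open>0 < c\<close> by simp
  then have "sqrt (1 - d / c * (2 - d)) = \<bar>(2 - d) * x - 1\<bar>" by (metis real_sqrt_abs)
  then have "sqrt (1 - d / c * (2 - d)) = (2 - d) * x - 1" using assms(4) by simp
  then show ?thesis using \<open>d < 2\<close> by (simp add: field_simps)
qed

lemma d_const_maximizer_eq:
  fixes c x :: real assumes c: "0 < c" "c < 1" and x: "x \<in> {0<..<1}"
    and "ratio_fn c x = d_const c"
  shows "x = (1 + sqrt (1 - d_const c / c * (2 - d_const c))) / (2 - d_const c)"
proof (rule quadratic_larger_root)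
  have x01: "0 < x" "x < 1" using x by auto
  have "\<forall>y\<in>{0<..<1}. ratio_fn c y \<le> d_const c" using ratio_fn_le_d_const[OF c] by blast
  note maximizer = c x01 assms(4) this
  show "c * (2 - d_const c) * x\<^sup>2 - 2 * c * x + d_const c = 0"
    using maximizer_quadratic_eq[OF maximizer] by blast
  show "1 \<le> (2 - d_const c) * x" using maximizer_beyond_vertex[OF maximizer] by blast
  show "d_const c < 2" using assms ratio_fn_less_one[OF c x01] by simp
qed (use c in simp)

lemma ratio_fn_div_strict_mono:
  fixes c1 c2 x :: real
  assumes c: "0 < c1" "c1 < c2" "c2 < 1" and x: "0 < x" "x < 1"
  shows "ratio_fn c1 x / c1 < ratio_fn c2 x / c2"
proof -
  have factor: "ratio_fn c x / c = (- ln (1 - c * x\<^sup>2) / (c * x\<^sup>2)) * (x\<^sup>2 / - ln (1 - x))"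
    if "0 < c" for c
    using that x by (simp add: ratio_fn_def field_simps)
  have "- ln (1 - c1 * x\<^sup>2) / (c1 * x\<^sup>2) < - ln (1 - c2 * x\<^sup>2) / (c2 * x\<^sup>2)"
    using scaled_square_bounds[of c1 x] scaled_square_bounds[of c2 x] c x
    by (intro minus_ln_one_minus_div_strict_mono) auto
  moreover have "0 < x\<^sup>2 / - ln (1 - x)" using x by (intro divide_pos_pos) auto
  ultimately show ?thesis
    unfolding factor[OF \<open>0 < c1\<close>] factor[OF order.strict_trans[OF c(1,2)]]
    by (rule mult_strict_right_mono)
qed

lemma psi_strict_mono: "strict_mono_on {0<..<1} psi"
proof (rule strict_mono_onI)
  fix r s :: real assume r: "r \<in> {0<..<1}" and s: "s \<in> {0<..<1}" and "r < s"
  obtain x where x: "x \<in> {0<..<1}" "ratio_fn r x = d_const r"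
    using d_const_attained[of r] r by auto
  have "psi r = ratio_fn r x / r" unfolding psi_def using x by simp
  also have "\<dots> < ratio_fn s x / s" using ratio_fn_div_strict_mono[of r s x] r s \<open>r < s\<close> x by auto
  also have "\<dots> \<le> psi s" unfolding psi_def using ratio_fn_le_d_const[of s x] s x
    by (intro divide_right_mono) auto
  finally show "psi r < psi s" .
qed

lemma m0_2_le_psi:
  fixes c :: real assumes c: "0 < c" "c < 1"
  shows "m0_2 \<le> psi c"
  unfolding m0_2_def
proof (rule cSUP_least)
  fix x :: real assume x: "x \<in> {0<..<1}"
  have "x\<^sup>2 / - ln (1 - x) \<le> ratio_fn c x / c" using ratio_fn_div_ge[OF c] x by auto
  also have "\<dots> \<le> psi c" unfolding psi_def using ratio_fn_le_d_const[OF c x] c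
    by (intro divide_right_mono) auto
  finally show "x\<^sup>2 / - ln (1 - x) \<le> psi c" .
qed simp

lemma square_div_minus_ln_one_minus_le_one:
  fixes x :: real assumes "0 < x" "x < 1"
  shows "x\<^sup>2 / - ln (1 - x) \<le> 1"
proof -
  have "x\<^sup>2 / - ln (1 - x) \<le> x\<^sup>2 / x"
    using minus_ln_one_minus_ge[of x] assms by (intro divide_left_mono mult_pos_pos) auto
  also have "\<dots> \<le> 1" using assms by (simp add: power2_eq_square)
  finally show ?thesis .
qed

lemma psi_le_m0_2_div:
  fixes c :: real assumes c: "0 < c" "c < 1"
  shows "psi c \<le> m0_2 / (1 - c)"
proof -
  obtain x where x: "x \<in> {0<..<1}" "ratio_fn c x = d_const c"
    using d_const_attained[OF c] by auto
  have "psi c = ratio_fn c x / c" unfolding psi_def using x by simp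
  also have "\<dots> \<le> x\<^sup>2 / - ln (1 - x) / (1 - c)" using ratio_fn_div_le[OF c] x(1) by simp
  also have "\<dots> \<le> m0_2 / (1 - c)"
    unfolding m0_2_def using c x square_div_minus_ln_one_minus_le_one
    by (intro divide_right_mono cSUP_upper bdd_aboveI2[of _ _ 1]) auto
  finally show ?thesis .
qed

lemma psi_tendsto_m0_2: "(psi \<longlongrightarrow> m0_2) (at_right 0)"
proof (rule tendsto_sandwich[OF _ _ tendsto_const])
  have "eventually (\<lambda>c. c \<in> {0<..<(1::real)}) (at_right 0)"
    by (rule eventually_at_right_real) simp
  then show "\<forall>\<^sub>F c in at_right 0. m0_2 \<le> psi c" "\<forall>\<^sub>F c in at_right 0. psi c \<le> m0_2 / (1 - c)"
    by (auto elim!: eventually_mono intro: m0_2_le_psi psi_le_m0_2_div)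
  have "((\<lambda>c. m0_2 / (1 - c)) \<longlongrightarrow> m0_2 / (1 - 0)) (at_right (0::real))"
    by (intro tendsto_intros) auto
  then show "((\<lambda>c. m0_2 / (1 - c)) \<longlongrightarrow> m0_2) (at_right 0)" by simp
qed

theorem mainTheorem5:
  shows "(\<forall>c\<in>{0<..<(1::real)}.
            (\<exists>x\<in>{0<..<1}. ratio_fn c x = d_const c) \<and>
            (\<forall>x\<in>{0<..<1}. ratio_fn c x = d_const c \<longrightarrow>
               x = (1 + sqrt (1 - d_const c / c * (2 - d_const c))) / (2 - d_const c)))
       \<and> strict_mono_on {0<..<1} psi
       \<and> (psi \<longlongrightarrow> m0_2) (at_right 0)"
  using d_const_attained d_const_maximizer_eq psi_strict_mono psi_tendsto_m0_2
  by (metis greaterThanLessThan_iff)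

end
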